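(* Consider the sparse linear Gaussian model: $S\in\{1,\dots,N\}$, $\mathcal{X}_S=\{\mathbf{x}\in\mathbb{R}^N:\|\mathbf{x}\|_0\le S\}$, $\mathbf{H}\in\mathbb{R}^{M\times N}$ with $\operatorname{spark}(\mathbf{H})>S$, $\sigma>0$, observation $\mathbf{y}=\mathbf{H}\mathbf{x}+\mathbf{n}$, $\mathbf{n}\sim\mathcal{N}(\mathbf{0},\sigma^2\mathbf{I})$, with parameter function $g(\mathbf{x})=x_k$ for a fixed $k\in[N]$. Let $c:\mathcal{X}_S\to\mathbb{R}$ be a bias function that is valid at every $\mathbf{x}_0\in\mathcal{X}_S$. If $c$ is continuous, then the minimum achievable variance $\mathbf{x}_0\mapsto M(c,\mathbf{x}_0)$ is a lower semi-continuous function on $\mathcal{X}_S$.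
   Context: An estimator $\hat g:\mathbb{R}^M\to\mathbb{R}$ has bias $b(\hat g;\mathbf{x})=\mathsf{E}_{\mathbf{x}}\{\hat g(\mathbf{y})\}-x_k$ and variance $v(\hat g;\mathbf{x})=\mathsf{E}_{\mathbf{x}}\{(\hat g(\mathbf{y})-\mathsf{E}_{\mathbf{x}}\hat g(\mathbf{y}))^2\}$. $c$ is valid at $\mathbf{x}_0$ if some estimator has $v(\hat g;\mathbf{x}_0)<\infty$ and $b(\hat g;\mathbf{x})=c(\mathbf{x})$ for all $\mathbf{x}\in\mathcal{X}_S$; $M(c,\mathbf{x}_0)$ is the infimum of $v(\hat g;\mathbf{x}_0)$ over all such estimators. $\|\cdot\|_0$ counts nonzero entries; $\operatorname{spark}$ = minimum number of linearly dependent columns. *)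

theory Defs
  imports "HOL-Probability.Probability" "HOL-Library.Extended_Nat"
begin

definition l0 :: "real^'n \<Rightarrow> nat" where
  "l0 x = card {i. x $ i \<noteq> 0}"

definition sparse_set :: "nat \<Rightarrow> (real^'n) set" where
  "sparse_set S = {x. l0 x \<le> S}"

definition cols_dependent :: "real^'n^'m \<Rightarrow> 'n set \<Rightarrow> bool" where
  "cols_dependent H C \<longleftrightarrow>
     (\<exists>a::'n \<Rightarrow> real. (\<exists>j\<in>C. a j \<noteq> 0) \<and> (\<Sum>j\<in>C. a j *\<^sub>R column j H) = 0)"

definition spark :: "real^'n^'m \<Rightarrow> enat" where
  "spark H = (INF C \<in> {C. cols_dependent H C}. enat (card C))"

definition gauss_dens :: "real \<Rightarrow> real^'n^'m \<Rightarrow> real^'n \<Rightarrow> real^'m \<Rightarrow> real" where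
  "gauss_dens \<sigma> H x y =
     (2 * pi * \<sigma>\<^sup>2) powr (- real CARD('m) / 2) * exp (- (norm (y - H *v x))\<^sup>2 / (2 * \<sigma>\<^sup>2))"

definition obs_meas :: "real \<Rightarrow> real^'n^'m \<Rightarrow> real^'n \<Rightarrow> (real^'m) measure" where
  "obs_meas \<sigma> H x = density lborel (\<lambda>y. ennreal (gauss_dens \<sigma> H x y))"

definition expect :: "real \<Rightarrow> real^'n^'m \<Rightarrow> real^'n \<Rightarrow> (real^'m \<Rightarrow> real) \<Rightarrow> real" where
  "expect \<sigma> H x g = integral\<^sup>L (obs_meas \<sigma> H x) g"

definition bias :: "real \<Rightarrow> real^'n^'m \<Rightarrow> 'n \<Rightarrow> (real^'m \<Rightarrow> real) \<Rightarrow> real^'n \<Rightarrow> real" where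
  "bias \<sigma> H k g x = expect \<sigma> H x g - x $ k"

definition var :: "real \<Rightarrow> real^'n^'m \<Rightarrow> (real^'m \<Rightarrow> real) \<Rightarrow> real^'n \<Rightarrow> real" where
  "var \<sigma> H g x = expect \<sigma> H x (\<lambda>y. (g y - expect \<sigma> H x g)\<^sup>2)"

definition admissible ::
  "real \<Rightarrow> real^'n^'m \<Rightarrow> nat \<Rightarrow> 'n \<Rightarrow> (real^'n \<Rightarrow> real) \<Rightarrow> real^'n \<Rightarrow> (real^'m \<Rightarrow> real) \<Rightarrow> bool" where
  "admissible \<sigma> H S k c x0 g \<longleftrightarrow>
     g \<in> borel_measurable borel \<and>
     (\<forall>x\<in>sparse_set S. integrable (obs_meas \<sigma> H x) g \<and> bias \<sigma> H k g x = c x) \<and>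
     integrable (obs_meas \<sigma> H x0) (\<lambda>y. (g y - expect \<sigma> H x0 g)\<^sup>2)"

definition valid_at ::
  "real \<Rightarrow> real^'n^'m \<Rightarrow> nat \<Rightarrow> 'n \<Rightarrow> (real^'n \<Rightarrow> real) \<Rightarrow> real^'n \<Rightarrow> bool" where
  "valid_at \<sigma> H S k c x0 \<longleftrightarrow> (\<exists>g. admissible \<sigma> H S k c x0 g)"

definition min_var ::
  "real \<Rightarrow> real^'n^'m \<Rightarrow> nat \<Rightarrow> 'n \<Rightarrow> (real^'n \<Rightarrow> real) \<Rightarrow> real^'n \<Rightarrow> real" where
  "min_var \<sigma> H S k c x0 = Inf {var \<sigma> H g x0 | g. admissible \<sigma> H S k c x0 g}"

definition lsc_on :: "'a::metric_space set \<Rightarrow> ('a \<Rightarrow> real) \<Rightarrow> bool" where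
  "lsc_on A f \<longleftrightarrow>
     (\<forall>x0\<in>A. \<forall>e>0. \<exists>d>0. \<forall>x\<in>A. dist x x0 < d \<longrightarrow> f x0 - e < f x)"

end

theory Submission
  imports Defs
begin

text \<open>Under the law at \<open>x0\<close>, the mean at \<open>s\<close> of an estimator \<open>g\<close> is the \<open>L\<^sup>2\<close> inner product
  of \<open>g\<close> with the likelihood ratio \<open>\<rho>\<^sub>s = p\<^sub>s / p\<^sub>x\<^sub>0\<close>, and for Gaussian noise
  \<open>\<langle>\<rho>\<^sub>s, \<rho>\<^sub>t\<rangle> = exp (\<langle>H(s - x0), H(t - x0)\<rangle> / \<sigma>\<^sup>2)\<close>. The estimators with bias function \<open>c\<close>
  are therefore the \<open>g \<in> L\<^sup>2\<close> with \<open>\<langle>g, \<rho>\<^sub>s\<rangle> = c s + s\<^sub>k\<close> for all sparse \<open>s\<close>, and the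
  least value of \<open>\<parallel>g\<parallel>\<^sup>2\<close> among them is the squared norm of their common projection onto
  the closed span of the \<open>\<rho>\<^sub>s\<close>. That is a supremum over finite combinations
  \<open>\<Sum> a\<^sub>s \<rho>\<^sub>s\<close> of expressions in \<open>c\<close> and the kernel above, each continuous in \<open>x0\<close>;
  a supremum of continuous functions is lower semicontinuous.\<close>

section \<open>Square-integrable functions\<close>

definition L2 :: "'a measure \<Rightarrow> ('a \<Rightarrow> real) \<Rightarrow> bool" where
  "L2 M f \<longleftrightarrow> f \<in> borel_measurable M \<and> integrable M (\<lambda>x. (f x)\<^sup>2)"

definition L2_inner :: "'a measure \<Rightarrow> ('a \<Rightarrow> real) \<Rightarrow> ('a \<Rightarrow> real) \<Rightarrow> real" where
  "L2_inner M f g = (\<integral>x. f x * g x \<partial>M)"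

lemma L2_mult_integrable:
  assumes "L2 M f" "L2 M g"
  shows "integrable M (\<lambda>x. f x * g x)"
proof -
  have [measurable]: "f \<in> borel_measurable M" "g \<in> borel_measurable M"
    using assms by (auto simp: L2_def)
  have "integrable M (\<lambda>x. (f x)\<^sup>2 + (g x)\<^sup>2)"
    using assms by (auto simp: L2_def)
  then show ?thesis
  proof (rule Bochner_Integration.integrable_bound)
    show "AE x in M. norm (f x * g x) \<le> norm ((f x)\<^sup>2 + (g x)\<^sup>2)"
    proof (rule AE_I2)
      fix x
      have "2 * (\<bar>f x\<bar> * \<bar>g x\<bar>) \<le> (f x)\<^sup>2 + (g x)\<^sup>2"
        using sum_squares_bound[of "\<bar>f x\<bar>" "\<bar>g x\<bar>"] by simp
      moreover have "0 \<le> \<bar>f x\<bar> * \<bar>g x\<bar>"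
        by simp
      ultimately have "\<bar>f x\<bar> * \<bar>g x\<bar> \<le> (f x)\<^sup>2 + (g x)\<^sup>2"
        by linarith
      then show "norm (f x * g x) \<le> norm ((f x)\<^sup>2 + (g x)\<^sup>2)"
        by (simp add: abs_mult)
    qed
  qed measurable
qed

lemma L2_add:
  assumes "L2 M f" "L2 M g"
  shows "L2 M (\<lambda>x. f x + g x)"
proof -
  have "integrable M (\<lambda>x. (f x)\<^sup>2 + (g x)\<^sup>2 + 2 * (f x * g x))"
    using assms L2_mult_integrable[OF assms] by (auto simp: L2_def)
  moreover have "(\<lambda>x. (f x)\<^sup>2 + (g x)\<^sup>2 + 2 * (f x * g x)) = (\<lambda>x. (f x + g x)\<^sup>2)"
    by (auto simp: power2_eq_square algebra_simps)
  ultimately show ?thesis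
    using assms by (auto simp: L2_def)
qed

lemma L2_cmult:
  assumes "L2 M f"
  shows "L2 M (\<lambda>x. c * f x)"
  using assms by (auto simp: L2_def power_mult_distrib)

lemma L2_diff:
  assumes "L2 M f" "L2 M g"
  shows "L2 M (\<lambda>x. f x - g x)"
  using L2_add[OF assms(1) L2_cmult[OF assms(2), of "-1"]] by simp

lemma L2_sum:
  assumes "\<And>i. i \<in> F \<Longrightarrow> L2 M (f i)"
  shows "L2 M (\<lambda>x. \<Sum>i\<in>F. f i x)"
  using assms
proof (induction F rule: infinite_finite_induct)
  case (insert a A)
  then show ?case by (simp add: L2_add)
qed (simp_all add: L2_def)

lemma L2_const:
  assumes "finite_measure M"
  shows "L2 M (\<lambda>x. c)"
proof -
  interpret finite_measure M by fact
  show ?thesis by (simp add: L2_def)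
qed

lemma L2_inner_commute: "L2_inner M f g = L2_inner M g f"
  by (simp add: L2_inner_def mult.commute)

lemma L2_inner_add_left:
  assumes "L2 M f" "L2 M g" "L2 M h"
  shows "L2_inner M (\<lambda>x. f x + g x) h = L2_inner M f h + L2_inner M g h"
  unfolding L2_inner_def
  using L2_mult_integrable[OF assms(1,3)] L2_mult_integrable[OF assms(2,3)]
  by (simp add: distrib_right)

lemma L2_inner_diff_left:
  assumes "L2 M f" "L2 M g" "L2 M h"
  shows "L2_inner M (\<lambda>x. f x - g x) h = L2_inner M f h - L2_inner M g h"
  unfolding L2_inner_def
  using L2_mult_integrable[OF assms(1,3)] L2_mult_integrable[OF assms(2,3)]
  by (simp add: left_diff_distrib)

lemma L2_inner_cmult_left: "L2_inner M (\<lambda>x. c * f x) h = c * L2_inner M f h"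
  by (simp add: L2_inner_def mult.assoc)

lemma L2_inner_sum_left:
  assumes "\<And>i. i \<in> F \<Longrightarrow> L2 M (f i)" "L2 M h"
  shows "L2_inner M (\<lambda>x. \<Sum>i\<in>F. f i x) h = (\<Sum>i\<in>F. L2_inner M (f i) h)"
  unfolding L2_inner_def
  using assms by (simp add: sum_distrib_right integral_sum L2_mult_integrable)

lemma L2_inner_add_right:
  assumes "L2 M f" "L2 M g" "L2 M h"
  shows "L2_inner M h (\<lambda>x. f x + g x) = L2_inner M h f + L2_inner M h g"
  using L2_inner_add_left[OF assms] by (simp add: L2_inner_commute)

lemma L2_inner_diff_right:
  assumes "L2 M f" "L2 M g" "L2 M h"
  shows "L2_inner M h (\<lambda>x. f x - g x) = L2_inner M h f - L2_inner M h g"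
  using L2_inner_diff_left[OF assms] by (simp add: L2_inner_commute)

lemma L2_inner_cmult_right: "L2_inner M h (\<lambda>x. c * f x) = c * L2_inner M h f"
  using L2_inner_cmult_left by (metis L2_inner_commute)

lemma L2_inner_sum_right:
  assumes "\<And>i. i \<in> F \<Longrightarrow> L2 M (f i)" "L2 M h"
  shows "L2_inner M h (\<lambda>x. \<Sum>i\<in>F. f i x) = (\<Sum>i\<in>F. L2_inner M h (f i))"
  using L2_inner_sum_left[OF assms] by (simp add: L2_inner_commute)

lemma L2_inner_self_nonneg: "0 \<le> L2_inner M f f"
  by (simp add: L2_inner_def)

lemma L2_inner_diff_self:
  assumes "L2 M f" "L2 M g"
  shows "L2_inner M (\<lambda>x. f x - g x) (\<lambda>x. f x - g x)
       = L2_inner M f f - 2 * L2_inner M f g + L2_inner M g g"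
  using assms L2_diff[OF assms]
  by (simp add: L2_inner_diff_left L2_inner_diff_right L2_inner_commute algebra_simps)

lemma quadratic_nonneg_imp_discriminant:
  fixes a b c :: real
  assumes nonneg: "\<And>t. 0 \<le> a + 2 * b * t + c * t\<^sup>2" and "0 \<le> c"
  shows "b\<^sup>2 \<le> a * c"
proof (cases "c = 0")
  case True
  have "b = 0"
  proof (rule ccontr)
    assume "b \<noteq> 0"
    have "0 \<le> a + 2 * b * (- (\<bar>a\<bar> + 1) / b)"
      using nonneg[of "- (\<bar>a\<bar> + 1) / b"] True by simp
    also have "\<dots> = a - 2 * (\<bar>a\<bar> + 1)"
      using \<open>b \<noteq> 0\<close> by (simp add: field_simps)
    finally show False by (cases "a \<ge> 0") auto
  qed
  then show ?thesis using True by simp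
next
  case False
  have "0 \<le> a + 2 * b * (- b / c) + c * (- b / c)\<^sup>2"
    by (rule nonneg)
  also have "\<dots> = a - b\<^sup>2 / c"
    using False by (simp add: field_simps power2_eq_square)
  finally show ?thesis
    using False \<open>0 \<le> c\<close> by (simp add: field_simps)
qed

lemma L2_Cauchy_Schwarz:
  assumes "L2 M f" "L2 M g"
  shows "(L2_inner M f g)\<^sup>2 \<le> L2_inner M f f * L2_inner M g g"
proof (rule quadratic_nonneg_imp_discriminant)
  fix t
  have tg: "L2 M (\<lambda>x. t * g x)"
    using assms(2) by (rule L2_cmult)
  have "0 \<le> L2_inner M (\<lambda>x. f x + t * g x) (\<lambda>x. f x + t * g x)"
    by (rule L2_inner_self_nonneg)
  also have "\<dots> = L2_inner M f f + 2 * L2_inner M f g * t + L2_inner M g g * t\<^sup>2"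
    using assms tg L2_add[OF assms(1) tg]
    by (simp add: L2_inner_add_left L2_inner_add_right L2_inner_cmult_left L2_inner_cmult_right
        L2_inner_commute power2_eq_square algebra_simps)
  finally show "0 \<le> L2_inner M f f + 2 * L2_inner M f g * t + L2_inner M g g * t\<^sup>2" .
qed (rule L2_inner_self_nonneg)

lemma (in prob_space) L1_le_sqrt_L2_inner:
  assumes "L2 M f"
  shows "(\<integral>x. \<bar>f x\<bar> \<partial>M) \<le> sqrt (L2_inner M f f)"
proof -
  have [measurable]: "f \<in> borel_measurable M"
    using assms by (simp add: L2_def)
  have "L2 M (\<lambda>x. \<bar>f x\<bar>)"
    using assms by (simp add: L2_def)
  then have "(L2_inner M (\<lambda>x. \<bar>f x\<bar>) (\<lambda>x. 1))\<^sup>2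
      \<le> L2_inner M (\<lambda>x. \<bar>f x\<bar>) (\<lambda>x. \<bar>f x\<bar>) * L2_inner M (\<lambda>x. 1) (\<lambda>x. 1)"
    by (rule L2_Cauchy_Schwarz[OF _ L2_const[OF finite_measure_axioms]])
  also have "\<dots> = L2_inner M f f"
    by (simp add: L2_inner_def prob_space abs_mult_self_eq)
  finally have "(\<integral>x. \<bar>f x\<bar> \<partial>M)\<^sup>2 \<le> L2_inner M f f"
    by (simp add: L2_inner_def)
  then show ?thesis
    by (simp add: real_le_rsqrt)
qed

section \<open>Completeness of \<open>L\<^sup>2\<close>\<close>

lemma AE_convergent_if_summable_L1_increments:
  fixes f :: "nat \<Rightarrow> 'a \<Rightarrow> real"
  assumes [measurable]: "\<And>n. f n \<in> borel_measurable M"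
    and integrable: "\<And>n. integrable M (\<lambda>x. f (Suc n) x - f n x)"
    and bound: "\<And>n. (\<integral>x. \<bar>f (Suc n) x - f n x\<bar> \<partial>M) \<le> b n"
    and "summable b"
  shows "AE x in M. convergent (\<lambda>n. f n x)"
proof -
  define d where "d n x = f (Suc n) x - f n x" for n x
  have [measurable]: "d n \<in> borel_measurable M" for n
    unfolding d_def by measurable
  have b_nonneg: "0 \<le> b n" for n
  proof -
    have "0 \<le> (\<integral>x. \<bar>f (Suc n) x - f n x\<bar> \<partial>M)"
      by (rule Bochner_Integration.integral_nonneg) simp
    then show ?thesis
      using bound[of n] by linarith
  qed
  have "(\<integral>\<^sup>+x. (\<Sum>n. ennreal \<bar>d n x\<bar>) \<partial>M) = (\<Sum>n. \<integral>\<^sup>+x. ennreal \<bar>d n x\<bar> \<partial>M)"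
    by (rule nn_integral_suminf) measurable
  also have "\<dots> = (\<Sum>n. ennreal (\<integral>x. \<bar>d n x\<bar> \<partial>M))"
    using integrable by (subst nn_integral_eq_integral) (auto simp: d_def)
  also have "\<dots> \<le> (\<Sum>n. ennreal (b n))"
    using bound by (intro suminf_le) (auto simp: d_def intro: ennreal_leI)
  also have "\<dots> = ennreal (\<Sum>n. b n)"
    using b_nonneg \<open>summable b\<close> by (rule suminf_ennreal2)
  finally have "(\<integral>\<^sup>+x. (\<Sum>n. ennreal \<bar>d n x\<bar>) \<partial>M) \<noteq> \<top>"
    by (rule neq_top_trans[OF ennreal_neq_top])
  then have "AE x in M. (\<Sum>n. ennreal \<bar>d n x\<bar>) \<noteq> \<top>"
    by (intro nn_integral_PInf_AE[unfolded infinity_ennreal_def]) measurable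
  then show ?thesis
  proof eventually_elim
    case (elim x)
    then have "summable (\<lambda>n. \<bar>d n x\<bar>)"
      by (intro summable_suminf_not_top) simp_all
    then have "summable (\<lambda>n. d n x)"
      by (rule summable_rabs_cancel)
    moreover have "(\<Sum>i<n. d i x) = f n x - f 0 x" for n
      unfolding d_def by (rule sum_lessThan_telescope)
    ultimately have "convergent (\<lambda>n. f n x - f 0 x)"
      by (simp add: summable_iff_convergent)
    then show "convergent (\<lambda>n. f n x)"
      by (simp add: convergent_diff_const_right_iff)
  qed
qed

lemma nn_integral_square_diff_limit_le:
  assumes [measurable]: "\<And>m. f m \<in> borel_measurable M" "g \<in> borel_measurable M"
    and lim: "AE x in M. (\<lambda>m. f m x) \<longlonglongrightarrow> u x"
    and bound: "\<forall>\<^sub>F m in sequentially. (\<integral>\<^sup>+x. ennreal ((f m x - g x)\<^sup>2) \<partial>M) \<le> C"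
  shows "(\<integral>\<^sup>+x. ennreal ((u x - g x)\<^sup>2) \<partial>M) \<le> C"
proof -
  have "(\<integral>\<^sup>+x. ennreal ((u x - g x)\<^sup>2) \<partial>M)
      = (\<integral>\<^sup>+x. liminf (\<lambda>m. ennreal ((f m x - g x)\<^sup>2)) \<partial>M)"
  proof (rule nn_integral_cong_AE)
    show "AE x in M. ennreal ((u x - g x)\<^sup>2) = liminf (\<lambda>m. ennreal ((f m x - g x)\<^sup>2))"
      using lim
    proof eventually_elim
      case (elim x)
      have "(\<lambda>m. ennreal ((f m x - g x)\<^sup>2)) \<longlonglongrightarrow> ennreal ((u x - g x)\<^sup>2)"
        by (intro tendsto_intros elim)
      then show ?case
        by (intro lim_imp_Liminf[symmetric]) auto
    qed
  qed
  also have "\<dots> \<le> liminf (\<lambda>m. \<integral>\<^sup>+x. ennreal ((f m x - g x)\<^sup>2) \<partial>M)"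
    by (rule nn_integral_liminf) measurable
  also have "\<dots> \<le> C"
    using bound by (intro Liminf_le) simp_all
  finally show ?thesis .
qed

lemma nn_integral_square_eq_L2_inner:
  assumes "L2 M f"
  shows "(\<integral>\<^sup>+x. ennreal ((f x)\<^sup>2) \<partial>M) = ennreal (L2_inner M f f)"
  using assms
  by (subst nn_integral_eq_integral) (auto simp: L2_def L2_inner_def power2_eq_square)

lemma (in prob_space) AE_convergent_if_L2_Cauchy:
  assumes L2: "\<And>n. L2 M (f n)"
    and Cauchy: "\<And>m n. n \<le> m \<Longrightarrow>
      L2_inner M (\<lambda>x. f m x - f n x) (\<lambda>x. f m x - f n x) \<le> (1/4)^n"
  shows "AE x in M. convergent (\<lambda>n. f n x)"
proof (rule AE_convergent_if_summable_L1_increments)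
  show "f n \<in> borel_measurable M" for n
    using L2 by (simp add: L2_def)
  have increment: "L2 M (\<lambda>x. f m x - f n x)" for m n
    by (rule L2_diff[OF L2 L2])
  show "integrable M (\<lambda>x. f (Suc n) x - f n x)" for n
    using increment[of "Suc n" n] square_integrable_imp_integrable unfolding L2_def by blast
  show "(\<integral>x. \<bar>f (Suc n) x - f n x\<bar> \<partial>M) \<le> (1/2)^n" for n
  proof -
    have "(\<integral>x. \<bar>f (Suc n) x - f n x\<bar> \<partial>M)
        \<le> sqrt (L2_inner M (\<lambda>x. f (Suc n) x - f n x) (\<lambda>x. f (Suc n) x - f n x))"
      by (rule L1_le_sqrt_L2_inner[OF increment])
    also have "\<dots> \<le> sqrt ((1/4)^n)"
      using Cauchy[of n "Suc n"] by (intro real_sqrt_le_mono) simp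
    also have "\<dots> = (1/2)^n"
      by (simp add: real_sqrt_power real_sqrt_divide)
    finally show ?thesis .
  qed
  show "summable (\<lambda>n. (1/2::real)^n)"
    by (rule summable_geometric) simp
qed

lemma (in prob_space) L2_complete:
  assumes L2: "\<And>n. L2 M (f n)"
    and Cauchy: "\<And>m n. n \<le> m \<Longrightarrow>
      L2_inner M (\<lambda>x. f m x - f n x) (\<lambda>x. f m x - f n x) \<le> (1/4)^n"
  obtains u where "L2 M u"
    and "\<And>n. L2_inner M (\<lambda>x. u x - f n x) (\<lambda>x. u x - f n x) \<le> (1/4)^n"
proof -
  have [measurable]: "f n \<in> borel_measurable M" for n
    using L2 by (simp add: L2_def)
  define u where "u x = lim (\<lambda>n. f n x)" for x
  have [measurable]: "u \<in> borel_measurable M"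
    unfolding u_def by measurable
  have "AE x in M. convergent (\<lambda>n. f n x)"
    using L2 Cauchy by (rule AE_convergent_if_L2_Cauchy)
  then have "AE x in M. (\<lambda>n. f n x) \<longlonglongrightarrow> u x"
    by eventually_elim (simp add: u_def convergent_LIMSEQ_iff)
  then have nn_bound: "(\<integral>\<^sup>+x. ennreal ((u x - f n x)\<^sup>2) \<partial>M) \<le> ennreal ((1/4)^n)" for n
  proof (rule nn_integral_square_diff_limit_le[rotated 2])
    show "\<forall>\<^sub>F m in sequentially. (\<integral>\<^sup>+x. ennreal ((f m x - f n x)\<^sup>2) \<partial>M) \<le> ennreal ((1/4)^n)"
      unfolding eventually_sequentially
      using nn_integral_square_eq_L2_inner[OF L2_diff[OF L2 L2]] Cauchy
      by (intro exI[of _ n]) (auto intro: ennreal_leI)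
  qed measurable
  have diff_L2: "L2 M (\<lambda>x. u x - f n x)" for n
  proof -
    have "integrable M (\<lambda>x. (u x - f n x)\<^sup>2)"
      using nn_bound[of n]
      by (intro integrableI_nonneg) (auto simp: le_less_trans[OF _ ennreal_less_top])
    then show ?thesis
      by (simp add: L2_def)
  qed
  show thesis
  proof
    show "L2 M u"
      using L2_add[OF diff_L2[of 0] L2[of 0]] by simp
    show "L2_inner M (\<lambda>x. u x - f n x) (\<lambda>x. u x - f n x) \<le> (1/4)^n" for n
      using nn_bound[of n] unfolding L2_inner_def power2_eq_square[symmetric]
      by (intro integral_real_bounded) auto
  qed
qed

section \<open>Projection onto a subspace\<close>

definition L2_subspace :: "'a measure \<Rightarrow> ('a \<Rightarrow> real) set \<Rightarrow> bool" where
  "L2_subspace M V \<longleftrightarrow> (\<forall>v\<in>V. L2 M v) \<and> (\<lambda>x. 0) \<in> V \<and>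
     (\<forall>v\<in>V. \<forall>w\<in>V. (\<lambda>x. v x + w x) \<in> V) \<and> (\<forall>v\<in>V. \<forall>c. (\<lambda>x. c * v x) \<in> V)"

lemma L2_subspace_L2: "L2_subspace M V \<Longrightarrow> v \<in> V \<Longrightarrow> L2 M v"
  by (simp add: L2_subspace_def)

lemma L2_subspace_add: "L2_subspace M V \<Longrightarrow> v \<in> V \<Longrightarrow> w \<in> V \<Longrightarrow> (\<lambda>x. v x + w x) \<in> V"
  by (simp add: L2_subspace_def)

lemma L2_subspace_cmult: "L2_subspace M V \<Longrightarrow> v \<in> V \<Longrightarrow> (\<lambda>x. c * v x) \<in> V"
  by (simp add: L2_subspace_def)

text \<open>\<open>L2_gain M g v\<close> is \<open>\<parallel>g\<parallel>\<^sup>2 - \<parallel>g - v\<parallel>\<^sup>2\<close>; maximising it over a subspace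
  approximates \<open>g\<close> from the subspace.\<close>

definition L2_gain :: "'a measure \<Rightarrow> ('a \<Rightarrow> real) \<Rightarrow> ('a \<Rightarrow> real) \<Rightarrow> real" where
  "L2_gain M g v = 2 * L2_inner M g v - L2_inner M v v"

lemma L2_gain_le:
  assumes "L2 M g" "L2 M v"
  shows "L2_gain M g v \<le> L2_inner M g g"
  using L2_inner_self_nonneg[of M "\<lambda>x. g x - v x"] L2_inner_diff_self[OF assms]
  by (simp add: L2_gain_def)

lemma L2_gain_parallelogram:
  assumes V: "L2_subspace M V" and g: "L2 M g"
    and B: "\<And>z. z \<in> V \<Longrightarrow> L2_gain M g z \<le> B"
    and v: "v \<in> V" and w: "w \<in> V"
  shows "L2_inner M (\<lambda>x. v x - w x) (\<lambda>x. v x - w x)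
       \<le> 2 * (2 * B - L2_gain M g v - L2_gain M g w)"
proof -
  have Lv: "L2 M v" and Lw: "L2 M w"
    using V v w by (auto intro: L2_subspace_L2)
  have Lvw: "L2 M (\<lambda>x. v x + w x)"
    using Lv Lw by (rule L2_add)
  have "(\<lambda>x. (1/2) * (v x + w x)) \<in> V"
    using L2_subspace_cmult[OF V L2_subspace_add[OF V v w]] .
  then have "L2_gain M g (\<lambda>x. (1/2) * (v x + w x)) \<le> B"
    by (rule B)
  moreover have "L2_inner M g (\<lambda>x. (1/2) * (v x + w x)) = (L2_inner M g v + L2_inner M g w) / 2"
    using Lv Lw g by (simp only: L2_inner_cmult_right) (simp add: L2_inner_add_right)
  moreover have "L2_inner M (\<lambda>x. (1/2) * (v x + w x)) (\<lambda>x. (1/2) * (v x + w x))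
      = (L2_inner M v v + 2 * L2_inner M v w + L2_inner M w w) / 4"
    using Lv Lw Lvw
    by (simp only: L2_inner_cmult_left L2_inner_cmult_right)
      (simp add: L2_inner_add_left L2_inner_add_right L2_inner_commute)
  ultimately show ?thesis
    using L2_inner_diff_self[OF Lv Lw] by (simp add: L2_gain_def field_simps)
qed

lemma L2_gain_defect:
  assumes V: "L2_subspace M V" and g: "L2 M g"
    and B: "\<And>z. z \<in> V \<Longrightarrow> L2_gain M g z \<le> B"
    and v: "v \<in> V" and z: "z \<in> V"
  shows "(L2_inner M g z - L2_inner M v z)\<^sup>2 \<le> (B - L2_gain M g v) * L2_inner M z z"
proof -
  have Lv: "L2 M v" and Lz: "L2 M z"
    using V v z by (auto intro: L2_subspace_L2)
  have "(- (L2_inner M g z - L2_inner M v z))\<^sup>2 \<le> (B - L2_gain M g v) * L2_inner M z z"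
  proof (rule quadratic_nonneg_imp_discriminant)
    fix t
    have Ltz: "L2 M (\<lambda>x. t * z x)"
      using Lz by (rule L2_cmult)
    have "(\<lambda>x. v x + t * z x) \<in> V"
      using L2_subspace_add[OF V v L2_subspace_cmult[OF V z]] .
    then have "L2_gain M g (\<lambda>x. v x + t * z x) \<le> B"
      by (rule B)
    moreover have "L2_gain M g (\<lambda>x. v x + t * z x)
        = L2_gain M g v + 2 * t * (L2_inner M g z - L2_inner M v z) - t\<^sup>2 * L2_inner M z z"
      using Lv Lz Ltz g L2_add[OF Lv Ltz]
      by (simp add: L2_gain_def L2_inner_add_left L2_inner_add_right L2_inner_cmult_left
          L2_inner_cmult_right L2_inner_commute power2_eq_square algebra_simps)
    ultimately show "0 \<le> B - L2_gain M g v + 2 * - (L2_inner M g z - L2_inner M v z) * t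
        + L2_inner M z z * t\<^sup>2"
      by (simp add: algebra_simps)
  qed (rule L2_inner_self_nonneg)
  then show ?thesis
    by (simp add: power2_commute)
qed

lemma L2_gain_maximising_sequence:
  assumes V: "L2_subspace M V" and g: "L2 M g"
  obtains B vs where "\<And>z. z \<in> V \<Longrightarrow> L2_gain M g z \<le> B" and "\<And>n. vs n \<in> V"
    and "\<And>n. B - L2_gain M g (vs n) \<le> (1/4)^Suc n"
proof -
  have V_ne: "V \<noteq> {}"
    using V by (auto simp: L2_subspace_def)
  define B where "B = (SUP v\<in>V. L2_gain M g v)"
  have bdd: "bdd_above (L2_gain M g ` V)"
    using L2_gain_le[OF g L2_subspace_L2[OF V]] by (auto intro!: bdd_aboveI)
  have "\<exists>v\<in>V. B - (1/4)^Suc n < L2_gain M g v" for n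
    unfolding B_def using V_ne bdd by (subst less_cSUP_iff[symmetric]) auto
  then obtain vs where vs: "\<And>n. vs n \<in> V" and vs_gain: "\<And>n. B - (1/4)^Suc n < L2_gain M g (vs n)"
    by metis
  show thesis
  proof (rule that)
    show "L2_gain M g z \<le> B" if "z \<in> V" for z
      unfolding B_def using that bdd by (rule cSUP_upper)
    show "B - L2_gain M g (vs n) \<le> (1/4)^Suc n" for n
      using vs_gain[of n] by linarith
  qed (rule vs)
qed

lemma L2_inner_eq_if_L2_gain_limit:
  assumes V: "L2_subspace M V" and g: "L2 M g"
    and B: "\<And>z. z \<in> V \<Longrightarrow> L2_gain M g z \<le> B"
    and vs: "\<And>n. vs n \<in> V" and gap: "\<And>n. B - L2_gain M g (vs n) \<le> (1/4)^n"
    and u: "L2 M u" and close: "\<And>n. L2_inner M (\<lambda>x. u x - vs n x) (\<lambda>x. u x - vs n x) \<le> (1/4)^n"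
    and z: "z \<in> V"
  shows "L2_inner M u z = L2_inner M g z"
proof -
  have Lz: "L2 M z" and Lvs: "L2 M (vs n)" for n
    using V z vs by (auto intro: L2_subspace_L2)
  have "(L2_inner M u z - L2_inner M g z)\<^sup>2 \<le> 4 * ((1/4)^n * L2_inner M z z)" for n
  proof -
    have "(L2_inner M u z - L2_inner M (vs n) z)\<^sup>2 = (L2_inner M (\<lambda>x. u x - vs n x) z)\<^sup>2"
      using u Lvs Lz by (simp add: L2_inner_diff_left)
    also have "\<dots> \<le> L2_inner M (\<lambda>x. u x - vs n x) (\<lambda>x. u x - vs n x) * L2_inner M z z"
      using u Lvs Lz by (intro L2_Cauchy_Schwarz L2_diff)
    also have "\<dots> \<le> (1/4)^n * L2_inner M z z"
      by (intro mult_right_mono close L2_inner_self_nonneg)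
    finally have 1: "(L2_inner M u z - L2_inner M (vs n) z)\<^sup>2 \<le> (1/4)^n * L2_inner M z z" .
    have "(L2_inner M g z - L2_inner M (vs n) z)\<^sup>2 \<le> (B - L2_gain M g (vs n)) * L2_inner M z z"
      by (rule L2_gain_defect[OF V g B vs z])
    also have "\<dots> \<le> (1/4)^n * L2_inner M z z"
      using gap by (intro mult_right_mono L2_inner_self_nonneg)
    finally have 2: "(L2_inner M g z - L2_inner M (vs n) z)\<^sup>2 \<le> (1/4)^n * L2_inner M z z" .
    have "(L2_inner M u z - L2_inner M g z)\<^sup>2
        \<le> 2 * (L2_inner M u z - L2_inner M (vs n) z)\<^sup>2 + 2 * (L2_inner M g z - L2_inner M (vs n) z)\<^sup>2"
      using zero_le_power2[of "L2_inner M u z + L2_inner M g z - 2 * L2_inner M (vs n) z"]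
      by (simp add: power2_eq_square algebra_simps)
    then show ?thesis
      using 1 2 by linarith
  qed
  moreover have "(\<lambda>n. 4 * ((1/4::real)^n * L2_inner M z z)) \<longlonglongrightarrow> 4 * (0 * L2_inner M z z)"
    by (intro tendsto_intros LIMSEQ_power_zero) simp
  ultimately have "(L2_inner M u z - L2_inner M g z)\<^sup>2 \<le> 0"
    by (intro LIMSEQ_le_const[where X = "\<lambda>n. 4 * ((1/4)^n * L2_inner M z z)"]) auto
  then show ?thesis
    by simp
qed

text \<open>The projection of \<open>g\<close> onto the closure of \<open>V\<close>: a maximising sequence for
  \<open>L2_gain M g\<close> is Cauchy by the parallelogram law, and its limit has the same inner
  products with \<open>V\<close> as \<open>g\<close>.\<close>

lemma (in prob_space) L2_projection:
  assumes V: "L2_subspace M V" and g: "L2 M g"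
  obtains u where "L2 M u"
    and "\<And>v. v \<in> V \<Longrightarrow> L2_inner M u v = L2_inner M g v"
    and "\<And>e. 0 < e \<Longrightarrow> \<exists>v\<in>V. L2_inner M u u < L2_gain M g v + e"
proof -
  obtain B vs where B: "\<And>z. z \<in> V \<Longrightarrow> L2_gain M g z \<le> B" and vs: "\<And>n. vs n \<in> V"
    and gap: "\<And>n. B - L2_gain M g (vs n) \<le> (1/4)^Suc n"
    using L2_gain_maximising_sequence[OF V g] by blast
  have gap': "B - L2_gain M g (vs n) \<le> (1/4)^n" for n
  proof -
    have "(1/4::real)^Suc n \<le> (1/4)^n"
      by (intro power_decreasing) auto
    then show ?thesis
      using gap[of n] by linarith
  qed
  have Lvs: "L2 M (vs n)" for n
    using V vs by (rule L2_subspace_L2)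
  have "L2_inner M (\<lambda>x. vs m x - vs n x) (\<lambda>x. vs m x - vs n x) \<le> (1/4)^n" if "n \<le> m" for m n
  proof -
    have "(1/4::real)^Suc m \<le> (1/4)^Suc n"
      using that by (intro power_decreasing) auto
    moreover have "4 * (1/4::real)^Suc n = (1/4)^n"
      by simp
    moreover have "L2_inner M (\<lambda>x. vs m x - vs n x) (\<lambda>x. vs m x - vs n x)
        \<le> 2 * (2 * B - L2_gain M g (vs m) - L2_gain M g (vs n))"
      by (rule L2_gain_parallelogram[OF V g B vs vs])
    ultimately show ?thesis
      using gap[of m] gap[of n] by argo
  qed
  then obtain u where u: "L2 M u"
    and close: "\<And>n. L2_inner M (\<lambda>x. u x - vs n x) (\<lambda>x. u x - vs n x) \<le> (1/4)^n"
    using L2_complete[of vs] Lvs by blast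
  have orth: "L2_inner M u z = L2_inner M g z" if "z \<in> V" for z
    using V g B vs gap' u close that by (rule L2_inner_eq_if_L2_gain_limit)
  show thesis
  proof (rule that[OF u orth])
    fix e :: real
    assume "0 < e"
    then obtain n where n: "(1/4)^n < e"
      using real_arch_pow_inv[of e "1/4"] by auto
    have "L2_inner M u u = L2_gain M g (vs n) + L2_inner M (\<lambda>x. u x - vs n x) (\<lambda>x. u x - vs n x)"
      using L2_inner_diff_self[OF u Lvs] orth[OF vs] by (simp add: L2_gain_def)
    also have "\<dots> < L2_gain M g (vs n) + e"
      using close[of n] n by simp
    finally show "\<exists>v\<in>V. L2_inner M u u < L2_gain M g v + e"
      using vs by blast
  qed
qed

section \<open>The Gaussian observation model\<close>

lemma nn_integral_lborel_translate:
  fixes f :: "'a::euclidean_space \<Rightarrow> ennreal"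
  assumes [measurable]: "f \<in> borel_measurable borel"
  shows "(\<integral>\<^sup>+y. f (y - m) \<partial>lborel) = (\<integral>\<^sup>+y. f y \<partial>lborel)"
proof -
  have "(\<integral>\<^sup>+y. f (y - m) \<partial>lborel) = (\<integral>\<^sup>+y. f (y - m) \<partial>(distr lborel borel ((+) m)))"
    by (simp add: lborel_distr_plus)
  also have "\<dots> = (\<integral>\<^sup>+y. f (m + y - m) \<partial>lborel)"
    by (subst nn_integral_distr) auto
  finally show ?thesis by simp
qed

lemma nn_integral_normal_density: "\<sigma> > 0 \<Longrightarrow> (\<integral>\<^sup>+t. ennreal (normal_density 0 \<sigma> t) \<partial>lborel) = 1"
  by (subst nn_integral_eq_integral) (auto simp: normal_density_nonneg)

lemma gauss_dens_prod:
  fixes H :: "real^'n^'m"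
  shows "gauss_dens \<sigma> H x y
    = (\<Prod>b\<in>(Basis::(real^'m) set). normal_density 0 \<sigma> ((y - H *v x) \<bullet> b))"
proof -
  define C where "C = 2 * pi * \<sigma>\<^sup>2"
  have cardB: "card (Basis :: (real^'m) set) = CARD('m)"
    using DIM_cart[where 'a=real and 'b='m] by simp
  have "(\<Prod>b\<in>(Basis::(real^'m) set). C powr (-1/2)) = (C powr (-1/2)) ^ CARD('m)"
    by (simp add: cardB)
  also have "\<dots> = C powr (- real CARD('m) / 2)"
  proof (cases "C = 0")
    case False
    then have "C > 0"
      unfolding C_def by (simp add: zero_less_power2 order_le_neq_trans)
    then show ?thesis
      by (simp add: powr_realpow[symmetric] powr_powr)
  qed simp
  finally have pw: "C powr (- real CARD('m) / 2) = (\<Prod>b\<in>(Basis::(real^'m) set). C powr (-1/2))" ..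
  have ex: "exp (- (norm z)\<^sup>2 / (2 * \<sigma>\<^sup>2))
      = (\<Prod>b\<in>(Basis::(real^'m) set). exp (- (z \<bullet> b)\<^sup>2 / (2 * \<sigma>\<^sup>2)))" for z :: "real^'m"
  proof -
    have "(norm z)\<^sup>2 = (\<Sum>b\<in>(Basis::(real^'m) set). (z \<bullet> b)\<^sup>2)"
      unfolding power2_norm_eq_inner by (subst euclidean_inner) (simp add: power2_eq_square)
    then show ?thesis
      by (simp add: exp_sum[symmetric] sum_divide_distrib[symmetric] sum_negf)
  qed
  have nd: "normal_density 0 \<sigma> t = C powr (-1/2) * exp (- t\<^sup>2 / (2 * \<sigma>\<^sup>2))" for t
    by (simp add: normal_density_def C_def powr_minus_divide powr_half_sqrt)
  show ?thesis
    unfolding gauss_dens_def nd prod.distrib ex[symmetric] using pw by (simp add: C_def)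
qed

lemma gauss_dens_nonneg: "gauss_dens \<sigma> H x y \<ge> 0"
  by (simp add: gauss_dens_def)

lemma gauss_dens_pos: "\<sigma> \<noteq> 0 \<Longrightarrow> gauss_dens \<sigma> H x y > 0"
  by (simp add: gauss_dens_def)

lemma gauss_dens_measurable[measurable]: "gauss_dens \<sigma> H x \<in> borel_measurable borel"
  unfolding gauss_dens_def by measurable

lemma gauss_nn_integral:
  fixes H :: "real^'n^'m"
  assumes "\<sigma> > 0"
  shows "(\<integral>\<^sup>+y. ennreal (gauss_dens \<sigma> H x y) \<partial>lborel) = 1"
proof -
  define F where "F z = ennreal (\<Prod>b\<in>(Basis::(real^'m) set). normal_density 0 \<sigma> (z \<bullet> b))" for z
  have [measurable]: "F \<in> borel_measurable borel"
    unfolding F_def normal_density_def by measurable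
  have "(\<integral>\<^sup>+y. ennreal (gauss_dens \<sigma> H x y) \<partial>lborel) = (\<integral>\<^sup>+y. F (y - H *v x) \<partial>lborel)"
    by (simp add: gauss_dens_prod F_def)
  also have "\<dots> = (\<integral>\<^sup>+y. F y \<partial>lborel)"
    by (rule nn_integral_lborel_translate) measurable
  also have "\<dots> = (\<integral>\<^sup>+y. (\<Prod>b\<in>(Basis::(real^'m) set). ennreal (normal_density 0 \<sigma> (y \<bullet> b))) \<partial>lborel)"
    unfolding F_def by (subst prod_ennreal) (auto simp: normal_density_nonneg)
  also have "\<dots> = (\<Prod>b\<in>(Basis::(real^'m) set). (\<integral>\<^sup>+t. ennreal (normal_density 0 \<sigma> t) \<partial>lborel))"
    by (rule nn_integral_lborel_prod) (auto simp: normal_density_def)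
  also have "\<dots> = 1"
    by (simp add: nn_integral_normal_density assms)
  finally show ?thesis .
qed

lemma prob_space_obs_meas: "\<sigma> > 0 \<Longrightarrow> prob_space (obs_meas \<sigma> H x)"
  unfolding obs_meas_def
  by (rule prob_spaceI) (simp add: emeasure_density gauss_nn_integral)

definition likelihood_ratio :: "real \<Rightarrow> real^'n^'m \<Rightarrow> real^'n \<Rightarrow> real^'n \<Rightarrow> real^'m \<Rightarrow> real" where
  "likelihood_ratio \<sigma> H x0 s y = gauss_dens \<sigma> H s y / gauss_dens \<sigma> H x0 y"

definition gauss_kernel :: "real \<Rightarrow> real^'n^'m \<Rightarrow> real^'n \<Rightarrow> real^'n \<Rightarrow> real^'n \<Rightarrow> real" where
  "gauss_kernel \<sigma> H x0 s t = exp (((H *v (s - x0)) \<bullet> (H *v (t - x0))) / \<sigma>\<^sup>2)"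

lemma likelihood_ratio_measurable[measurable]:
  "likelihood_ratio \<sigma> H x0 s \<in> borel_measurable borel"
  unfolding likelihood_ratio_def by measurable

lemma likelihood_ratio_nonneg: "likelihood_ratio \<sigma> H x0 s y \<ge> 0"
  unfolding likelihood_ratio_def by (simp add: gauss_dens_nonneg)

lemma norm_diff_power2_polarization:
  fixes y a b c :: "'a::real_inner"
  shows "- (norm (y - a))\<^sup>2 - (norm (y - b))\<^sup>2 + (norm (y - c))\<^sup>2
         = 2 * ((a - c) \<bullet> (b - c)) - (norm (y - (a + b - c)))\<^sup>2"
  unfolding power2_norm_eq_inner by (simp add: inner_simps inner_commute algebra_simps)

lemma gauss_dens_mult_likelihood_ratios:
  fixes H :: "real^'n^'m"
  assumes "\<sigma> \<noteq> 0"
  shows "gauss_dens \<sigma> H x0 y * (likelihood_ratio \<sigma> H x0 s y * likelihood_ratio \<sigma> H x0 t y)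
         = gauss_kernel \<sigma> H x0 s t * gauss_dens \<sigma> H (s + t - x0) y"
proof -
  define C where "C = (2 * pi * \<sigma>\<^sup>2) powr (- real CARD('m) / 2)"
  have C: "C > 0"
    unfolding C_def using assms by simp
  define E where "E z = - (norm (y - H *v z))\<^sup>2 / (2 * \<sigma>\<^sup>2)" for z
  have g: "gauss_dens \<sigma> H z y = C * exp (E z)" for z
    unfolding gauss_dens_def C_def E_def ..
  have "gauss_dens \<sigma> H x0 y * (likelihood_ratio \<sigma> H x0 s y * likelihood_ratio \<sigma> H x0 t y)
      = C * exp (E s + E t - E x0)"
    unfolding likelihood_ratio_def g using C by (simp add: exp_add exp_diff field_simps)
  also have "E s + E t - E x0 = ((H *v (s - x0)) \<bullet> (H *v (t - x0))) / \<sigma>\<^sup>2 + E (s + t - x0)"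
  proof -
    have "- (norm (y - H *v s))\<^sup>2 - (norm (y - H *v t))\<^sup>2 + (norm (y - H *v x0))\<^sup>2
        = 2 * ((H *v s - H *v x0) \<bullet> (H *v t - H *v x0))
          - (norm (y - (H *v s + H *v t - H *v x0)))\<^sup>2"
      by (rule norm_diff_power2_polarization)
    then show ?thesis
      using assms unfolding E_def
      by (simp add: matrix_vector_mult_diff_distrib matrix_vector_right_distrib field_simps)
  qed
  finally show ?thesis
    by (simp add: gauss_kernel_def g exp_add)
qed

lemma gauss_dens_integrable:
  fixes H :: "real^'n^'m"
  assumes "\<sigma> > 0"
  shows "integrable lborel (gauss_dens \<sigma> H x)"
    and "(\<integral>y. gauss_dens \<sigma> H x y \<partial>lborel) = 1"
proof -
  show i: "integrable lborel (gauss_dens \<sigma> H x)"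
    by (rule integrableI_nonneg) (auto simp: gauss_dens_nonneg gauss_nn_integral assms)
  have "(\<integral>\<^sup>+y. ennreal (gauss_dens \<sigma> H x y) \<partial>lborel)
      = ennreal (\<integral>y. gauss_dens \<sigma> H x y \<partial>lborel)"
    using i by (intro nn_integral_eq_integral) (auto simp: gauss_dens_nonneg)
  then show "(\<integral>y. gauss_dens \<sigma> H x y \<partial>lborel) = 1"
    using gauss_nn_integral[OF assms, of H x] by simp
qed

lemma obs_meas_density:
  assumes "\<sigma> \<noteq> 0"
  shows "obs_meas \<sigma> H s = density (obs_meas \<sigma> H x0) (\<lambda>y. ennreal (likelihood_ratio \<sigma> H x0 s y))"
proof -
  have "density (obs_meas \<sigma> H x0) (\<lambda>y. ennreal (likelihood_ratio \<sigma> H x0 s y))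
      = density lborel (\<lambda>y. ennreal (gauss_dens \<sigma> H x0 y) * ennreal (likelihood_ratio \<sigma> H x0 s y))"
    unfolding obs_meas_def by (rule density_density_eq) auto
  also have "(\<lambda>y. ennreal (gauss_dens \<sigma> H x0 y) * ennreal (likelihood_ratio \<sigma> H x0 s y))
      = (\<lambda>y. ennreal (gauss_dens \<sigma> H s y))"
  proof
    fix y
    have "gauss_dens \<sigma> H x0 y \<noteq> 0"
      using gauss_dens_pos[OF assms, of H x0 y] by simp
    then show "ennreal (gauss_dens \<sigma> H x0 y) * ennreal (likelihood_ratio \<sigma> H x0 s y)
        = ennreal (gauss_dens \<sigma> H s y)"
      by (simp add: ennreal_mult'[symmetric] likelihood_ratio_def gauss_dens_nonneg)
  qed
  finally show ?thesis
    by (simp add: obs_meas_def)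
qed

lemma measurable_obs_meas[simp]:
  "g \<in> borel_measurable (obs_meas \<sigma> H x) \<longleftrightarrow> g \<in> borel_measurable borel"
  unfolding obs_meas_def by simp

lemma integrable_obs_meas_iff:
  assumes "\<sigma> \<noteq> 0" "g \<in> borel_measurable borel"
  shows "integrable (obs_meas \<sigma> H s) g
    \<longleftrightarrow> integrable (obs_meas \<sigma> H x0) (\<lambda>y. likelihood_ratio \<sigma> H x0 s y * g y)"
  unfolding obs_meas_density[OF assms(1), of H s x0]
  using assms by (subst integrable_density) (auto simp: likelihood_ratio_nonneg)

lemma expect_eq_likelihood_ratio:
  assumes "\<sigma> \<noteq> 0" "g \<in> borel_measurable borel"
  shows "expect \<sigma> H s g = (\<integral>y. likelihood_ratio \<sigma> H x0 s y * g y \<partial>obs_meas \<sigma> H x0)"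
  unfolding expect_def obs_meas_density[OF assms(1), of H s x0]
  using assms by (subst integral_density) (auto simp: likelihood_ratio_nonneg)

lemma likelihood_ratio_L2_inner:
  fixes H :: "real^'n^'m"
  assumes "\<sigma> > 0"
  shows "integrable (obs_meas \<sigma> H x0) (\<lambda>y. likelihood_ratio \<sigma> H x0 s y * likelihood_ratio \<sigma> H x0 t y)"
    and "L2_inner (obs_meas \<sigma> H x0) (likelihood_ratio \<sigma> H x0 s) (likelihood_ratio \<sigma> H x0 t)
      = gauss_kernel \<sigma> H x0 s t"
proof -
  have eq: "(\<lambda>y. gauss_dens \<sigma> H x0 y * (likelihood_ratio \<sigma> H x0 s y * likelihood_ratio \<sigma> H x0 t y))
      = (\<lambda>y. gauss_kernel \<sigma> H x0 s t * gauss_dens \<sigma> H (s + t - x0) y)"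
    using gauss_dens_mult_likelihood_ratios[of \<sigma> H x0 _ s t] assms by simp
  show "integrable (obs_meas \<sigma> H x0) (\<lambda>y. likelihood_ratio \<sigma> H x0 s y * likelihood_ratio \<sigma> H x0 t y)"
    unfolding obs_meas_def
    by (subst integrable_density) (auto simp: gauss_dens_nonneg eq gauss_dens_integrable(1)[OF assms])
  have "L2_inner (obs_meas \<sigma> H x0) (likelihood_ratio \<sigma> H x0 s) (likelihood_ratio \<sigma> H x0 t)
      = (\<integral>y. gauss_dens \<sigma> H x0 y * (likelihood_ratio \<sigma> H x0 s y * likelihood_ratio \<sigma> H x0 t y) \<partial>lborel)"
    unfolding L2_inner_def obs_meas_def by (subst integral_density) (auto simp: gauss_dens_nonneg)
  also have "\<dots> = gauss_kernel \<sigma> H x0 s t * (\<integral>y. gauss_dens \<sigma> H (s + t - x0) y \<partial>lborel)"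
    unfolding eq by simp
  also have "\<dots> = gauss_kernel \<sigma> H x0 s t"
    using gauss_dens_integrable(2)[OF assms, of H "s + t - x0"] by simp
  finally show "L2_inner (obs_meas \<sigma> H x0) (likelihood_ratio \<sigma> H x0 s) (likelihood_ratio \<sigma> H x0 t)
      = gauss_kernel \<sigma> H x0 s t" .
qed

lemma L2_likelihood_ratio:
  fixes H :: "real^'n^'m"
  assumes "\<sigma> > 0"
  shows "L2 (obs_meas \<sigma> H x0) (likelihood_ratio \<sigma> H x0 s)"
  using likelihood_ratio_L2_inner(1)[OF assms, of H x0 s s] by (simp add: L2_def power2_eq_square)

section \<open>Estimators as elements of \<open>L\<^sup>2\<close>\<close>

text \<open>The mean at \<open>s\<close> of every estimator with bias function \<open>c\<close>.\<close>

definition target_mean :: "(real^'n \<Rightarrow> real) \<Rightarrow> 'n \<Rightarrow> real^'n \<Rightarrow> real" where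
  "target_mean c k s = c s + s $ k"

lemma (in finite_measure) L2_iff_integrable_square_diff:
  assumes "integrable M f"
  shows "L2 M f \<longleftrightarrow> integrable M (\<lambda>x. (f x - c)\<^sup>2)"
proof
  assume "L2 M f"
  then have "L2 M (\<lambda>x. f x - c)"
    using L2_const[OF finite_measure_axioms] by (rule L2_diff)
  then show "integrable M (\<lambda>x. (f x - c)\<^sup>2)"
    by (simp add: L2_def)
next
  assume "integrable M (\<lambda>x. (f x - c)\<^sup>2)"
  then have "integrable M (\<lambda>x. (f x - c)\<^sup>2 + 2 * c * f x - c\<^sup>2)"
    using assms by simp
  then show "L2 M f"
    using assms by (simp add: L2_def power2_eq_square algebra_simps)
qed

lemma admissible_iff_L2_inner:
  fixes H :: "real^'n^'m"
  assumes \<sigma>: "\<sigma> > 0" and x: "x \<in> sparse_set S"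
  shows "admissible \<sigma> H S k c x g \<longleftrightarrow> L2 (obs_meas \<sigma> H x) g \<and>
    (\<forall>s\<in>sparse_set S. L2_inner (obs_meas \<sigma> H x) g (likelihood_ratio \<sigma> H x s) = target_mean c k s)"
    (is "_ \<longleftrightarrow> L2 ?M g \<and> _")
proof -
  interpret prob_space ?M
    by (rule prob_space_obs_meas[OF \<sigma>])
  have mean: "expect \<sigma> H s g = L2_inner ?M g (likelihood_ratio \<sigma> H x s)"
    if "g \<in> borel_measurable borel" for s
    using expect_eq_likelihood_ratio[of \<sigma> g H s x] \<sigma> that by (simp add: L2_inner_def mult.commute)
  show ?thesis
  proof
    assume adm: "admissible \<sigma> H S k c x g"
    then have "L2 ?M g"
      using x L2_iff_integrable_square_diff by (auto simp: admissible_def)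
    moreover have "L2_inner ?M g (likelihood_ratio \<sigma> H x s) = target_mean c k s"
      if "s \<in> sparse_set S" for s
      using adm that mean by (auto simp: admissible_def bias_def target_mean_def)
    ultimately show "L2 ?M g
      \<and> (\<forall>s\<in>sparse_set S. L2_inner ?M g (likelihood_ratio \<sigma> H x s) = target_mean c k s)"
      by blast
  next
    assume "L2 ?M g \<and> (\<forall>s\<in>sparse_set S. L2_inner ?M g (likelihood_ratio \<sigma> H x s) = target_mean c k s)"
    then have L: "L2 ?M g"
      and inner: "\<And>s. s \<in> sparse_set S \<Longrightarrow> L2_inner ?M g (likelihood_ratio \<sigma> H x s) = target_mean c k s"
      by auto
    have [measurable]: "g \<in> borel_measurable borel"
      using L by (simp add: L2_def)
    have integrable: "integrable (obs_meas \<sigma> H s) g" for s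
      using L2_mult_integrable[OF L2_likelihood_ratio[OF \<sigma>] L] integrable_obs_meas_iff[of \<sigma> g H s x] \<sigma>
      by simp
    moreover have "bias \<sigma> H k g s = c s" if "s \<in> sparse_set S" for s
      using inner[OF that] mean by (simp add: bias_def target_mean_def)
    moreover have "integrable ?M (\<lambda>y. (g y - expect \<sigma> H x g)\<^sup>2)"
      using L L2_iff_integrable_square_diff[OF integrable] by blast
    ultimately show "admissible \<sigma> H S k c x g"
      by (simp add: admissible_def)
  qed
qed

lemma var_eq_L2_inner:
  fixes H :: "real^'n^'m"
  assumes \<sigma>: "\<sigma> > 0" and x: "x \<in> sparse_set S" and adm: "admissible \<sigma> H S k c x g"
  shows "var \<sigma> H g x = L2_inner (obs_meas \<sigma> H x) g g - (target_mean c k x)\<^sup>2"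
proof -
  interpret prob_space "obs_meas \<sigma> H x"
    by (rule prob_space_obs_meas[OF \<sigma>])
  have L: "L2 (obs_meas \<sigma> H x) g"
    using admissible_iff_L2_inner[OF \<sigma> x] adm by blast
  have gi: "integrable (obs_meas \<sigma> H x) g"
    using adm x by (simp add: admissible_def)
  have ggi: "integrable (obs_meas \<sigma> H x) (\<lambda>y. g y * g y)"
    using L by (simp add: L2_def power2_eq_square)
  define m where "m = expect \<sigma> H x g"
  have "m = target_mean c k x"
    using adm x by (auto simp: admissible_def bias_def target_mean_def m_def)
  have "var \<sigma> H g x = (\<integral>y. g y * g y - 2 * m * g y + m * m \<partial>obs_meas \<sigma> H x)"
    unfolding var_def expect_def m_def[unfolded expect_def, symmetric]
    by (rule Bochner_Integration.integral_cong) (auto simp: power2_eq_square algebra_simps)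
  also have "\<dots> = L2_inner (obs_meas \<sigma> H x) g g - 2 * m * m + m * m"
    using gi ggi by (simp add: prob_space L2_inner_def m_def expect_def)
  finally show ?thesis
    using \<open>m = target_mean c k x\<close> by (simp add: power2_eq_square)
qed

lemma min_var_le_var:
  assumes "admissible \<sigma> H S k c x g"
  shows "min_var \<sigma> H S k c x \<le> var \<sigma> H g x"
  unfolding min_var_def
proof (rule cInf_lower)
  show "bdd_below {var \<sigma> H g x |g. admissible \<sigma> H S k c x g}"
    by (rule bdd_belowI[where m = 0]) (auto simp: var_def expect_def)
qed (use assms in blast)

definition kernel_gain ::
  "real \<Rightarrow> real^'n^'m \<Rightarrow> (real^'n \<Rightarrow> real) \<Rightarrow> 'n \<Rightarrow> (real^'n) set \<Rightarrow> (real^'n \<Rightarrow> real) \<Rightarrow> real^'n \<Rightarrow> real"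
  where "kernel_gain \<sigma> H c k F a x =
    2 * (\<Sum>s\<in>F. a s * target_mean c k s) - (\<Sum>s\<in>F. \<Sum>t\<in>F. a s * a t * gauss_kernel \<sigma> H x s t)"

lemma L2_likelihood_ratio_comb:
  fixes H :: "real^'n^'m"
  assumes "\<sigma> > 0"
  shows "L2 (obs_meas \<sigma> H x) (\<lambda>y. \<Sum>s\<in>F. a s * likelihood_ratio \<sigma> H x s y)"
  by (rule L2_sum) (rule L2_cmult[OF L2_likelihood_ratio[OF assms]])

lemma L2_gain_likelihood_ratio_comb:
  fixes H :: "real^'n^'m"
  assumes \<sigma>: "\<sigma> > 0" and x: "x \<in> sparse_set S" and adm: "admissible \<sigma> H S k c x g"
    and F: "F \<subseteq> sparse_set S"
  shows "L2_gain (obs_meas \<sigma> H x) g (\<lambda>y. \<Sum>s\<in>F. a s * likelihood_ratio \<sigma> H x s y)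
    = kernel_gain \<sigma> H c k F a x"
proof -
  let ?M = "obs_meas \<sigma> H x"
  have L: "L2 ?M (\<lambda>y. a s * likelihood_ratio \<sigma> H x s y)" for s
    by (rule L2_cmult[OF L2_likelihood_ratio[OF \<sigma>]])
  have g: "L2 ?M g"
    and g_inner: "\<And>s. s \<in> sparse_set S \<Longrightarrow> L2_inner ?M g (likelihood_ratio \<sigma> H x s) = target_mean c k s"
    using adm unfolding admissible_iff_L2_inner[OF \<sigma> x] by auto
  have "L2_inner ?M g (\<lambda>y. \<Sum>s\<in>F. a s * likelihood_ratio \<sigma> H x s y)
      = (\<Sum>s\<in>F. a s * L2_inner ?M g (likelihood_ratio \<sigma> H x s))"
    by (simp add: L2_inner_sum_right[OF L g] L2_inner_cmult_right)
  also have "\<dots> = (\<Sum>s\<in>F. a s * target_mean c k s)"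
    using F g_inner by (intro sum.cong) auto
  finally have cross: "L2_inner ?M g (\<lambda>y. \<Sum>s\<in>F. a s * likelihood_ratio \<sigma> H x s y)
      = (\<Sum>s\<in>F. a s * target_mean c k s)" .
  have "L2_inner ?M (\<lambda>y. \<Sum>s\<in>F. a s * likelihood_ratio \<sigma> H x s y)
      (\<lambda>y. \<Sum>t\<in>F. a t * likelihood_ratio \<sigma> H x t y)
      = (\<Sum>s\<in>F. \<Sum>t\<in>F. L2_inner ?M (\<lambda>y. a s * likelihood_ratio \<sigma> H x s y)
          (\<lambda>y. a t * likelihood_ratio \<sigma> H x t y))"
    by (simp add: L2_inner_sum_left[OF L L2_likelihood_ratio_comb[OF \<sigma>]] L2_inner_sum_right[OF L L])
  also have "\<dots> = (\<Sum>s\<in>F. \<Sum>t\<in>F. a s * a t * gauss_kernel \<sigma> H x s t)"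
    by (simp add: L2_inner_cmult_left L2_inner_cmult_right likelihood_ratio_L2_inner(2)[OF \<sigma>]
        mult.assoc)
  finally show ?thesis
    using cross by (simp add: L2_gain_def kernel_gain_def)
qed

lemma kernel_gain_le_min_var:
  fixes H :: "real^'n^'m"
  assumes \<sigma>: "\<sigma> > 0" and x: "x \<in> sparse_set S" and valid: "valid_at \<sigma> H S k c x"
    and F: "F \<subseteq> sparse_set S"
  shows "kernel_gain \<sigma> H c k F a x - (target_mean c k x)\<^sup>2 \<le> min_var \<sigma> H S k c x"
  unfolding min_var_def
proof (rule cInf_greatest)
  show "{var \<sigma> H g x |g. admissible \<sigma> H S k c x g} \<noteq> {}"
    using valid by (auto simp: valid_at_def)
next
  fix r
  assume "r \<in> {var \<sigma> H g x |g. admissible \<sigma> H S k c x g}"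
  then obtain g where adm: "admissible \<sigma> H S k c x g" and r: "r = var \<sigma> H g x"
    by auto
  have "L2 (obs_meas \<sigma> H x) g"
    using admissible_iff_L2_inner[OF \<sigma> x] adm by blast
  then have "L2_gain (obs_meas \<sigma> H x) g (\<lambda>y. \<Sum>s\<in>F. a s * likelihood_ratio \<sigma> H x s y)
      \<le> L2_inner (obs_meas \<sigma> H x) g g"
    using L2_likelihood_ratio_comb[OF \<sigma>] by (rule L2_gain_le)
  then have "kernel_gain \<sigma> H c k F a x \<le> L2_inner (obs_meas \<sigma> H x) g g"
    by (simp add: L2_gain_likelihood_ratio_comb[OF \<sigma> x adm F])
  then show "kernel_gain \<sigma> H c k F a x - (target_mean c k x)\<^sup>2 \<le> r"
    using var_eq_L2_inner[OF \<sigma> x adm] r by simp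
qed

lemma continuous_on_kernel_gain:
  fixes H :: "real^'n^'m"
  shows "continuous_on A (kernel_gain \<sigma> H c k F a)"
proof -
  have "continuous_on A (\<lambda>x. H *v (s - x))" for s :: "real^'n"
    by (rule continuous_on_compose2[OF matrix_vector_mult_linear_continuous_on[of UNIV H]])
      (auto intro!: continuous_intros)
  then show ?thesis
    unfolding kernel_gain_def[abs_def] gauss_kernel_def divide_inverse
    by (intro continuous_intros)
qed

section \<open>Lower semicontinuity of the minimum variance\<close>

definition likelihood_ratio_span ::
  "real \<Rightarrow> real^'n^'m \<Rightarrow> real^'n \<Rightarrow> (real^'n) set \<Rightarrow> (real^'m \<Rightarrow> real) set"
  where "likelihood_ratio_span \<sigma> H x X =
    {(\<lambda>y. \<Sum>s\<in>F. a s * likelihood_ratio \<sigma> H x s y) | F a. finite F \<and> F \<subseteq> X}"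

lemma likelihood_ratio_in_span:
  assumes "s \<in> X"
  shows "likelihood_ratio \<sigma> H x s \<in> likelihood_ratio_span \<sigma> H x X"
proof -
  have "likelihood_ratio \<sigma> H x s = (\<lambda>y. \<Sum>s'\<in>{s}. 1 * likelihood_ratio \<sigma> H x s' y)"
    by simp
  then show ?thesis
    using assms unfolding likelihood_ratio_span_def
    by (intro CollectI exI[of _ "{s}"] exI[of _ "\<lambda>_. 1"]) simp
qed

lemma sum_add_sum_eq_sum_union:
  fixes a b :: "'a \<Rightarrow> 'b::semiring_0"
  assumes "finite F" "finite G"
  shows "(\<Sum>s\<in>F. a s * r s) + (\<Sum>s\<in>G. b s * r s)
    = (\<Sum>s\<in>F \<union> G. ((if s \<in> F then a s else 0) + (if s \<in> G then b s else 0)) * r s)"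
proof -
  have extend: "(\<Sum>s\<in>F \<union> G. (if s \<in> A then f s else 0) * r s) = (\<Sum>s\<in>A. f s * r s)"
    if "A \<subseteq> F \<union> G" for A f
  proof -
    have "(\<Sum>s\<in>F \<union> G. (if s \<in> A then f s else 0) * r s) = (\<Sum>s\<in>F \<union> G. if s \<in> A then f s * r s else 0)"
      by (rule sum.cong) auto
    also have "\<dots> = (\<Sum>s\<in>(F \<union> G) \<inter> A. f s * r s)"
      using assms by (simp add: sum.inter_restrict)
    also have "(F \<union> G) \<inter> A = A"
      using that by blast
    finally show ?thesis .
  qed
  show ?thesis
    unfolding distrib_right sum.distrib using extend[of F a] extend[of G b] by simp
qed

lemma L2_subspace_likelihood_ratio_span:
  fixes H :: "real^'n^'m"
  assumes "\<sigma> > 0"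
  shows "L2_subspace (obs_meas \<sigma> H x) (likelihood_ratio_span \<sigma> H x X)"
proof -
  let ?r = "likelihood_ratio \<sigma> H x"
  have add: "(\<lambda>y. (\<Sum>s\<in>F. a s * ?r s y) + (\<Sum>s\<in>G. b s * ?r s y)) \<in> likelihood_ratio_span \<sigma> H x X"
    if "finite F" "F \<subseteq> X" "finite G" "G \<subseteq> X" for F G a b
    unfolding sum_add_sum_eq_sum_union[OF \<open>finite F\<close> \<open>finite G\<close>] likelihood_ratio_span_def
    using that
    by (intro CollectI exI[of _ "F \<union> G"]
        exI[of _ "\<lambda>s. (if s \<in> F then a s else 0) + (if s \<in> G then b s else 0)"]) simp
  have cmult: "(\<lambda>y. c * (\<Sum>s\<in>F. a s * ?r s y)) \<in> likelihood_ratio_span \<sigma> H x X"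
    if "finite F" "F \<subseteq> X" for F a c
  proof -
    have "(\<lambda>y. c * (\<Sum>s\<in>F. a s * ?r s y)) = (\<lambda>y. \<Sum>s\<in>F. (c * a s) * ?r s y)"
      by (simp add: sum_distrib_left mult.assoc)
    then show ?thesis
      using that unfolding likelihood_ratio_span_def
      by (intro CollectI exI[of _ F] exI[of _ "\<lambda>s. c * a s"]) simp
  qed
  have "(\<lambda>y. 0) \<in> likelihood_ratio_span \<sigma> H x X"
    unfolding likelihood_ratio_span_def by (intro CollectI exI[of _ "{}"]) simp
  then show ?thesis
    unfolding L2_subspace_def
    using add cmult L2_likelihood_ratio_comb[OF assms]
    by (auto simp: likelihood_ratio_span_def)
qed

lemma min_var_approx:
  fixes H :: "real^'n^'m"
  assumes \<sigma>: "\<sigma> > 0" and x: "x \<in> sparse_set S" and valid: "valid_at \<sigma> H S k c x"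
    and e: "0 < e"
  obtains F a where "F \<subseteq> sparse_set S"
    and "min_var \<sigma> H S k c x < kernel_gain \<sigma> H c k F a x - (target_mean c k x)\<^sup>2 + e"
proof -
  let ?M = "obs_meas \<sigma> H x"
  let ?V = "likelihood_ratio_span \<sigma> H x (sparse_set S)"
  interpret prob_space ?M
    by (rule prob_space_obs_meas[OF \<sigma>])
  obtain g where adm: "admissible \<sigma> H S k c x g"
    using valid by (auto simp: valid_at_def)
  then have g: "L2 ?M g"
    and g_inner: "\<And>s. s \<in> sparse_set S \<Longrightarrow> L2_inner ?M g (likelihood_ratio \<sigma> H x s) = target_mean c k s"
    unfolding admissible_iff_L2_inner[OF \<sigma> x] by auto
  obtain u where u: "L2 ?M u" and orth: "\<And>v. v \<in> ?V \<Longrightarrow> L2_inner ?M u v = L2_inner ?M g v"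
    and approx: "\<And>e. 0 < e \<Longrightarrow> \<exists>v\<in>?V. L2_inner ?M u u < L2_gain ?M g v + e"
    using L2_projection[OF L2_subspace_likelihood_ratio_span[OF \<sigma>, where X = "sparse_set S"] g]
    by blast
  have u_adm: "admissible \<sigma> H S k c x u"
    unfolding admissible_iff_L2_inner[OF \<sigma> x]
    using u orth[OF likelihood_ratio_in_span] g_inner by simp
  obtain v where "v \<in> ?V" and v: "L2_inner ?M u u < L2_gain ?M g v + e"
    using approx[OF e] by blast
  then obtain F a where F: "F \<subseteq> sparse_set S"
    and v_eq: "v = (\<lambda>y. \<Sum>s\<in>F. a s * likelihood_ratio \<sigma> H x s y)"
    unfolding likelihood_ratio_span_def by blast
  have "min_var \<sigma> H S k c x \<le> var \<sigma> H u x"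
    by (rule min_var_le_var[OF u_adm])
  also have "\<dots> = L2_inner ?M u u - (target_mean c k x)\<^sup>2"
    by (rule var_eq_L2_inner[OF \<sigma> x u_adm])
  also have "\<dots> < kernel_gain \<sigma> H c k F a x - (target_mean c k x)\<^sup>2 + e"
    using v unfolding v_eq L2_gain_likelihood_ratio_comb[OF \<sigma> x adm F] by simp
  finally show thesis
    using F that by blast
qed

lemma lsc_on_SUP_continuous:
  fixes f :: "'a::metric_space \<Rightarrow> real"
  assumes cont: "\<And>i. i \<in> I \<Longrightarrow> continuous_on A (h i)"
    and below: "\<And>i x. i \<in> I \<Longrightarrow> x \<in> A \<Longrightarrow> h i x \<le> f x"
    and approx: "\<And>x e. x \<in> A \<Longrightarrow> 0 < e \<Longrightarrow> \<exists>i\<in>I. f x < h i x + e"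
  shows "lsc_on A f"
  unfolding lsc_on_def
proof (intro ballI allI impI)
  fix x0 and e :: real
  assume x0: "x0 \<in> A" and e: "0 < e"
  then obtain i where i: "i \<in> I" and fi: "f x0 < h i x0 + e / 2"
    using approx[of x0 "e / 2"] by auto
  obtain d where "0 < d" and d: "\<And>x. x \<in> A \<Longrightarrow> dist x x0 < d \<Longrightarrow> dist (h i x) (h i x0) < e / 2"
    using cont[OF i] x0 e unfolding continuous_on_iff by (meson half_gt_zero)
  have "f x0 - e < f x" if "x \<in> A" "dist x x0 < d" for x
  proof -
    have "h i x0 - e / 2 < h i x"
      using d[OF that] unfolding dist_real_def by arith
    then show ?thesis
      using below[OF i \<open>x \<in> A\<close>] fi by linarith
  qed
  then show "\<exists>d>0. \<forall>x\<in>A. dist x x0 < d \<longrightarrow> f x0 - e < f x"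
    using \<open>0 < d\<close> by blast
qed

lemma continuous_on_target_mean:
  assumes "continuous_on A c"
  shows "continuous_on A (target_mean c k)"
  unfolding target_mean_def[abs_def]
  by (intro continuous_on_add assms linear_continuous_on bounded_linear_vec_nth)

theorem corollary2:
  fixes H :: "real^'n^'m" and \<sigma> :: real and S :: nat and k :: 'n
    and c :: "real^'n \<Rightarrow> real"
  assumes "1 \<le> S" and "S \<le> CARD('n)"
    and "spark H > enat S"
    and "\<sigma> > 0"
    and "\<forall>x0\<in>sparse_set S. valid_at \<sigma> H S k c x0"
    and "continuous_on (sparse_set S) c"
  shows "lsc_on (sparse_set S) (min_var \<sigma> H S k c)"
proof -
  note \<sigma> = \<open>\<sigma> > 0\<close> and valid = \<open>\<forall>x0\<in>sparse_set S. valid_at \<sigma> H S k c x0\<close>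
  define h where "h = (\<lambda>(F, a) x. kernel_gain \<sigma> H c k F a x - (target_mean c k x)\<^sup>2)"
  show ?thesis
  proof (rule lsc_on_SUP_continuous[where I = "{(F, a). F \<subseteq> sparse_set S}" and h = h])
    show "continuous_on (sparse_set S) (h i)" for i
      using continuous_on_target_mean[OF \<open>continuous_on (sparse_set S) c\<close>]
      by (cases i) (simp add: h_def continuous_on_diff continuous_on_kernel_gain continuous_on_power)
    show "h i x \<le> min_var \<sigma> H S k c x"
      if i: "i \<in> {(F, a). F \<subseteq> sparse_set S}" and x: "x \<in> sparse_set S" for i x
    proof -
      obtain F a where "i = (F, a)" and F: "F \<subseteq> sparse_set S"
        using i by blast
      then show ?thesis
        using kernel_gain_le_min_var[OF \<sigma> x valid[rule_format, OF x] F] by (simp add: h_def)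
    qed
    show "\<exists>i\<in>{(F, a). F \<subseteq> sparse_set S}. min_var \<sigma> H S k c x < h i x + e"
      if x: "x \<in> sparse_set S" and "0 < e" for x e
    proof -
      obtain F a where "F \<subseteq> sparse_set S"
        and "min_var \<sigma> H S k c x < kernel_gain \<sigma> H c k F a x - (target_mean c k x)\<^sup>2 + e"
        by (rule min_var_approx[OF \<sigma> x valid[rule_format, OF x] \<open>0 < e\<close>])
      then show ?thesis
        by (intro bexI[of _ "(F, a)"]) (simp_all add: h_def)
    qed
  qed
qed
end
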